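(* Let $N\ge1$, $S_1,\dots,S_N\ge1$, and consider an $S_1\times\cdots\times S_N$-setting $N$-partite correlation experiment with joint distributions $P_{(s_1,\dots,s_N)}$ on $\Lambda_1^{(s_1)}\times\cdots\times\Lambda_N^{(s_N)}$, where the outcomes are real with $\lambda_n^{(s_n)}\in\Lambda_n^{(s_n)}\subseteq[-1,1]$, $\sup\Lambda_n^{(s_n)}=1$, $\inf\Lambda_n^{(s_n)}=-1$ for all $s_n,n$ (of any spectral type, discrete or continuous), and suppose it admits an LHV model. Then for any collection of real coefficients $\gamma_{(s_{n_1},\dots,s_{n_M})}$ ($1\le M\le N$, $1\le n_1<\dots<n_M\le N$, $s_{n_j}\in\{1,\dots,S_{n_j}\}$) the tight linear LHV constraint on correlation functions $$\min_{\eta_1\in\{-1,1\}^{S_1},\dots,\eta_N\in\{-1,1\}^{S_N}}\sum_{\substack{1\le n_1<\dots<n_M\le N\\ M=1,\dots,N}}F_M^{(\gamma)}(\eta_{n_1},\dots,\eta_{n_M})\le\sum_{\substack{1\le n_1<\dots<n_M\le N\\ M=1,\dots,N}}\ \sum_{s_{n_1},\dots,s_{n_M}}\gamma_{(s_{n_1},\dots,s_{n_M})}\big\langle\lambda_{n_1}^{(s_{n_1})}\cdots\lambda_{n_M}^{(s_{n_M})}\big\rangle_{LHV}\le\max_{\eta_1\in\{-1,1\}^{S_1},\dots,\eta_N\in\{-1,1\}^{S_N}}\sum_{\substack{1\le n_1<\dots<n_M\le N\\ M=1,\dots,N}}F_M^{(\gamma)}(\eta_{n_1},\dots,\eta_{n_M})$$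 holds, where $F_M^{(\gamma)}(\eta_{n_1},\dots,\eta_{n_M})=\sum_{s_{n_1},\dots,s_{n_M}}\gamma_{(s_{n_1},\dots,s_{n_M})}\eta_{n_1}^{(s_{n_1})}\cdots\eta_{n_M}^{(s_{n_M})}$ for $\eta_n=(\eta_n^{(1)},\dots,\eta_n^{(S_n)})\in\mathbb{R}^{S_n}$; the extrema are over all $2^{S_1+\dots+S_N}$ vertices of the hypercube $[-1,1]^{S_1+\dots+S_N}$.
   Context: The experiment admitting an LHV model is characterized by the existence of a probability measure $\mu$ on the product of all outcome spaces $\prod_{n}\prod_{s_n}\Lambda_n^{(s_n)}$ whose marginal on $(\lambda_1^{(s_1)},\dots,\lambda_N^{(s_N)})$ is $P_{(s_1,\dots,s_N)}$ for every joint setting. The correlation function $\langle\lambda_{n_1}^{(s_{n_1})}\cdots\lambda_{n_M}^{(s_{n_M})}\rangle_{LHV}$ is $\int\lambda_{n_1}^{(s_{n_1})}\cdots\lambda_{n_M}^{(s_{n_M})}\,dP_{(s_1,\dots,s_N)}$ for any joint setting with the given settings at sites $n_1,\dots,n_M$ (in the LHV case it does not depend on the settings at the other sites). A linear LHV constraint is tight if, within the class of experiments with the given outcome sets admitting an LHV model, its bounds cannot be improved. *)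

theory Defs
  imports "HOL-Probability.Probability"
begin

text \<open>Parties are indexed by 0..N-1, settings of party n by 0..S n - 1.
  Lam n s is the outcome set of party n under setting s.\<close>

definition settings :: "nat \<Rightarrow> (nat \<Rightarrow> nat) \<Rightarrow> (nat \<Rightarrow> nat) set" where
  "settings N S = PiE {..<N} (\<lambda>n. {..<S n})"

definition outcome_space ::
  "nat \<Rightarrow> (nat \<Rightarrow> nat \<Rightarrow> real set) \<Rightarrow> (nat \<Rightarrow> nat) \<Rightarrow> (nat \<Rightarrow> real) measure" where
  "outcome_space N Lam s = PiM {..<N} (\<lambda>n. restrict_space borel (Lam n (s n)))"

definition all_pairs :: "nat \<Rightarrow> (nat \<Rightarrow> nat) \<Rightarrow> (nat \<times> nat) set" where
  "all_pairs N S = {(n, s). n < N \<and> s < S n}"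

definition hidden_space ::
  "nat \<Rightarrow> (nat \<Rightarrow> nat) \<Rightarrow> (nat \<Rightarrow> nat \<Rightarrow> real set) \<Rightarrow> (nat \<times> nat \<Rightarrow> real) measure" where
  "hidden_space N S Lam = PiM (all_pairs N S) (\<lambda>(n, s). restrict_space borel (Lam n s))"

definition corr_experiment ::
  "nat \<Rightarrow> (nat \<Rightarrow> nat) \<Rightarrow> (nat \<Rightarrow> nat \<Rightarrow> real set) \<Rightarrow> ((nat \<Rightarrow> nat) \<Rightarrow> (nat \<Rightarrow> real) measure) \<Rightarrow> bool" where
  "corr_experiment N S Lam P \<longleftrightarrow>
     (\<forall>s \<in> settings N S. prob_space (P s) \<and> sets (P s) = sets (outcome_space N Lam s))"

definition admits_LHV ::
  "nat \<Rightarrow> (nat \<Rightarrow> nat) \<Rightarrow> (nat \<Rightarrow> nat \<Rightarrow> real set) \<Rightarrow> ((nat \<Rightarrow> nat) \<Rightarrow> (nat \<Rightarrow> real) measure) \<Rightarrow> bool" where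
  "admits_LHV N S Lam P \<longleftrightarrow>
     (\<exists>\<mu>. prob_space \<mu> \<and> sets \<mu> = sets (hidden_space N S Lam) \<and>
        (\<forall>s \<in> settings N S.
           distr \<mu> (outcome_space N Lam s) (\<lambda>\<omega>. \<lambda>n\<in>{..<N}. \<omega> (n, s n)) = P s))"

definition LHV_experiment where
  "LHV_experiment N S Lam P \<longleftrightarrow> corr_experiment N S Lam P \<and> admits_LHV N S Lam P"

text \<open>Correlation function for the sites in A with settings t (t \<in> PiE A ...):
  computed w.r.t. the joint setting that extends t by setting 0 at the other sites
  (in the LHV case it does not depend on this choice).\<close>
definition extend_setting :: "nat \<Rightarrow> nat set \<Rightarrow> (nat \<Rightarrow> nat) \<Rightarrow> (nat \<Rightarrow> nat)" where
  "extend_setting N A t = (\<lambda>n\<in>{..<N}. if n \<in> A then t n else 0)"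

definition correlation ::
  "nat \<Rightarrow> ((nat \<Rightarrow> nat) \<Rightarrow> (nat \<Rightarrow> real) measure) \<Rightarrow> nat set \<Rightarrow> (nat \<Rightarrow> nat) \<Rightarrow> real" where
  "correlation N P A t = (\<integral>x. (\<Prod>n\<in>A. x n) \<partial>(P (extend_setting N A t)))"

definition site_sets :: "nat \<Rightarrow> nat set set" where
  "site_sets N = {A. A \<subseteq> {..<N} \<and> A \<noteq> {}}"

text \<open>gamma A t is the coefficient gamma_(s_{n_1},...,s_{n_M}) for A = {n_1,...,n_M},
  t n_j = s_{n_j}.\<close>
definition Bell_value ::
  "nat \<Rightarrow> (nat \<Rightarrow> nat) \<Rightarrow> (nat set \<Rightarrow> (nat \<Rightarrow> nat) \<Rightarrow> real) \<Rightarrow> ((nat \<Rightarrow> nat) \<Rightarrow> (nat \<Rightarrow> real) measure) \<Rightarrow> real" where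
  "Bell_value N S \<gamma> P =
     (\<Sum>A\<in>site_sets N. \<Sum>t\<in>PiE A (\<lambda>n. {..<S n}). \<gamma> A t * correlation N P A t)"

text \<open>F_M^(gamma)(eta_{n_1},...,eta_{n_M}); eta n s = eta_n^(s).\<close>
definition F_gamma ::
  "(nat \<Rightarrow> nat) \<Rightarrow> (nat set \<Rightarrow> (nat \<Rightarrow> nat) \<Rightarrow> real) \<Rightarrow> nat set \<Rightarrow> (nat \<Rightarrow> nat \<Rightarrow> real) \<Rightarrow> real" where
  "F_gamma S \<gamma> A \<eta> = (\<Sum>t\<in>PiE A (\<lambda>n. {..<S n}). \<gamma> A t * (\<Prod>n\<in>A. \<eta> n (t n)))"

definition F_total ::
  "nat \<Rightarrow> (nat \<Rightarrow> nat) \<Rightarrow> (nat set \<Rightarrow> (nat \<Rightarrow> nat) \<Rightarrow> real) \<Rightarrow> (nat \<Rightarrow> nat \<Rightarrow> real) \<Rightarrow> real" where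
  "F_total N S \<gamma> \<eta> = (\<Sum>A\<in>site_sets N. F_gamma S \<gamma> A \<eta>)"

definition vertices :: "nat \<Rightarrow> (nat \<Rightarrow> nat) \<Rightarrow> (nat \<Rightarrow> nat \<Rightarrow> real) set" where
  "vertices N S = PiE {..<N} (\<lambda>n. PiE {..<S n} (\<lambda>_. {-1, 1}))"

end

theory Submission imports Defs begin

text \<open>Each term of \<open>F_total\<close> is a product containing every entry \<open>\<eta> n s\<close> at most once, so
  \<open>F_total\<close> is affine in each entry separately; hence on the cube \<open>[-1,1]\<^sup>S\<close> it is a convex
  combination of its values at vertices, and lies between their minimum and maximum. In an LHV
  model every correlation is the integral against the hidden measure \<open>\<mu>\<close> of a product of hidden
  outcomes, so the Bell value is the \<open>\<mu>\<close>-average of \<open>F_total\<close> at the hidden outcome vector, which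
  lies in the cube. For tightness, since \<open>sup \<Lambda> = 1\<close> and \<open>inf \<Lambda> = -1\<close> there are outcome
  vectors converging to any vertex; the deterministic models concentrated there have Bell values
  converging, by continuity, to the value of \<open>F_total\<close> at that vertex.\<close>

definition cube :: "nat \<Rightarrow> (nat \<Rightarrow> nat) \<Rightarrow> (nat \<Rightarrow> nat \<Rightarrow> real) set" where
  "cube N S = {\<eta>. \<forall>n<N. \<forall>s<S n. \<eta> n s \<in> {-1..1}}"

definition set_entry :: "(nat \<Rightarrow> nat \<Rightarrow> real) \<Rightarrow> nat \<Rightarrow> nat \<Rightarrow> real \<Rightarrow> nat \<Rightarrow> nat \<Rightarrow> real" where
  "set_entry \<eta> n0 s0 x = \<eta>(n0 := (\<eta> n0)(s0 := x))"

lemma site_setsD: "A \<in> site_sets N \<Longrightarrow> finite A \<and> A \<subseteq> {..<N}"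
  unfolding site_sets_def using finite_subset by blast

lemma finite_all_pairs: "finite (all_pairs N S)"
proof -
  have "all_pairs N S = Sigma {..<N} (\<lambda>n. {..<S n})" unfolding all_pairs_def by auto
  then show ?thesis by simp
qed

lemma finite_vertices: "finite (vertices N S)"
  and vertices_nonempty: "vertices N S \<noteq> {}"
  unfolding vertices_def by (auto intro!: finite_PiE simp: PiE_eq_empty_iff)

subsection \<open>Multi-affinity of \<open>F_total\<close> and its extremes on the cube\<close>

lemma prod_set_entry_affine:
  fixes x :: real
  assumes "finite A"
  shows "(\<Prod>n\<in>A. set_entry \<eta> n0 s0 x n (t n)) =
     (1 + x) / 2 * (\<Prod>n\<in>A. set_entry \<eta> n0 s0 1 n (t n))
   + (1 - x) / 2 * (\<Prod>n\<in>A. set_entry \<eta> n0 s0 (-1) n (t n))"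
proof (cases "n0 \<in> A \<and> t n0 = s0")
  case True
  have "(\<Prod>n\<in>A. set_entry \<eta> n0 s0 y n (t n)) = y * (\<Prod>n\<in>A-{n0}. \<eta> n (t n))" for y
  proof -
    have "(\<Prod>n\<in>A. set_entry \<eta> n0 s0 y n (t n))
        = set_entry \<eta> n0 s0 y n0 (t n0) * (\<Prod>n\<in>A-{n0}. set_entry \<eta> n0 s0 y n (t n))"
      using True by (intro prod.remove[OF assms]) simp
    also have "(\<Prod>n\<in>A-{n0}. set_entry \<eta> n0 s0 y n (t n)) = (\<Prod>n\<in>A-{n0}. \<eta> n (t n))"
      by (rule prod.cong) (auto simp: set_entry_def)
    finally show ?thesis using True by (simp add: set_entry_def)
  qed
  then show ?thesis by (simp add: field_simps)
next
  case False
  have "(\<Prod>n\<in>A. set_entry \<eta> n0 s0 y n (t n)) = (\<Prod>n\<in>A. \<eta> n (t n))" for y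
    by (rule prod.cong) (use False in \<open>auto simp: set_entry_def\<close>)
  then show ?thesis by (simp add: field_simps)
qed

lemma F_total_set_entry_affine:
  "F_total N S \<gamma> (set_entry \<eta> n0 s0 x) =
     (1 + x) / 2 * F_total N S \<gamma> (set_entry \<eta> n0 s0 1)
   + (1 - x) / 2 * F_total N S \<gamma> (set_entry \<eta> n0 s0 (-1))"
  unfolding F_total_def F_gamma_def sum_distrib_left sum.distrib[symmetric]
proof (intro sum.cong refl)
  fix A t assume "A \<in> site_sets N"
  then have "finite A" by (simp add: site_setsD)
  then show "\<gamma> A t * (\<Prod>n\<in>A. set_entry \<eta> n0 s0 x n (t n)) =
      (1 + x) / 2 * (\<gamma> A t * (\<Prod>n\<in>A. set_entry \<eta> n0 s0 1 n (t n)))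
    + (1 - x) / 2 * (\<gamma> A t * (\<Prod>n\<in>A. set_entry \<eta> n0 s0 (-1) n (t n)))"
    by (subst prod_set_entry_affine) (simp_all add: algebra_simps)
qed

lemma F_total_cong:
  assumes "\<And>n s. n < N \<Longrightarrow> s < S n \<Longrightarrow> \<eta> n s = \<eta>' n s"
  shows "F_total N S \<gamma> \<eta> = F_total N S \<gamma> \<eta>'"
  unfolding F_total_def F_gamma_def
  by (intro sum.cong prod.cong refl arg_cong[where f = "\<lambda>y. _ * y"] assms)
     (auto dest!: site_setsD simp: PiE_def Pi_def)

lemma convex_combination_between:
  fixes u v x y m M :: real
  assumes "0 \<le> u" "0 \<le> v" "u + v = 1" "m \<le> x" "x \<le> M" "m \<le> y" "y \<le> M"
  shows "m \<le> u * x + v * y \<and> u * x + v * y \<le> M"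
proof
  have "u * (-x) + v * (-y) \<le> -m"
    using assms by (intro convex_bound_le) auto
  then show "m \<le> u * x + v * y" by simp
  show "u * x + v * y \<le> M"
    using assms by (intro convex_bound_le) auto
qed

text \<open>Induction on the finite set \<open>C\<close> of entries of \<open>\<eta>\<close> that are not yet \<open>\<plusminus>1\<close>.\<close>

lemma F_total_between_vertex_extremes_aux:
  assumes "finite C" "\<eta> \<in> cube N S"
    and "\<And>n s. n < N \<Longrightarrow> s < S n \<Longrightarrow> (n, s) \<notin> C \<Longrightarrow> \<eta> n s \<in> {-1, 1}"
  shows "Min (F_total N S \<gamma> ` vertices N S) \<le> F_total N S \<gamma> \<eta>
       \<and> F_total N S \<gamma> \<eta> \<le> Max (F_total N S \<gamma> ` vertices N S)"
  using assms
proof (induction C arbitrary: \<eta> rule: finite_induct)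
  case empty
  define v where "v = (\<lambda>n\<in>{..<N}. \<lambda>s\<in>{..<S n}. \<eta> n s)"
  have "v \<in> vertices N S" using empty.prems(2) unfolding vertices_def v_def by auto
  moreover have "F_total N S \<gamma> \<eta> = F_total N S \<gamma> v" by (rule F_total_cong) (simp add: v_def)
  ultimately show ?case using finite_vertices by (auto intro!: Min_le Max_ge)
next
  case (insert c C)
  obtain n0 s0 where c: "c = (n0, s0)" by fastforce
  show ?case
  proof (cases "n0 < N \<and> s0 < S n0")
    case False
    then show ?thesis using insert.prems c by (intro insert.IH) auto
  next
    case True
    define x where "x = \<eta> n0 s0"
    have x: "-1 \<le> x" "x \<le> 1" using insert.prems(1) True by (auto simp: cube_def x_def)
    have "F_total N S \<gamma> \<eta> = F_total N S \<gamma> (set_entry \<eta> n0 s0 x)"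
      by (simp add: set_entry_def x_def)
    also have "\<dots> = (1 + x) / 2 * F_total N S \<gamma> (set_entry \<eta> n0 s0 1)
        + (1 - x) / 2 * F_total N S \<gamma> (set_entry \<eta> n0 s0 (-1))"
      by (rule F_total_set_entry_affine)
    finally have affine: "F_total N S \<gamma> \<eta> = \<dots>" .
    have vertex_bounds: "Min (F_total N S \<gamma> ` vertices N S) \<le> F_total N S \<gamma> (set_entry \<eta> n0 s0 y)
        \<and> F_total N S \<gamma> (set_entry \<eta> n0 s0 y) \<le> Max (F_total N S \<gamma> ` vertices N S)"
      if "y \<in> {-1, 1}" for y
      using insert.prems that c by (intro insert.IH) (auto simp: cube_def set_entry_def)
    show ?thesis
      unfolding affine using x vertex_bounds[of 1] vertex_bounds[of "-1"]
      by (intro convex_combination_between) (auto simp: field_simps)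
  qed
qed

lemma F_total_between_vertex_extremes:
  assumes "\<eta> \<in> cube N S"
  shows "Min (F_total N S \<gamma> ` vertices N S) \<le> F_total N S \<gamma> \<eta>
       \<and> F_total N S \<gamma> \<eta> \<le> Max (F_total N S \<gamma> ` vertices N S)"
  by (rule F_total_between_vertex_extremes_aux[OF finite_all_pairs[of N S] assms])
     (simp add: all_pairs_def)

subsection \<open>Bell values of LHV models as averages of \<open>F_total\<close>\<close>

definition LHV_marginal ::
  "nat \<Rightarrow> (nat \<Rightarrow> nat \<Rightarrow> real set) \<Rightarrow> (nat \<times> nat \<Rightarrow> real) measure \<Rightarrow> (nat \<Rightarrow> nat) \<Rightarrow> (nat \<Rightarrow> real) measure"
  where "LHV_marginal N Lam \<mu> s = distr \<mu> (outcome_space N Lam s) (\<lambda>\<omega>. \<lambda>n\<in>{..<N}. \<omega> (n, s n))"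

lemma admits_LHV_iff:
  "admits_LHV N S Lam P \<longleftrightarrow> (\<exists>\<mu>. prob_space \<mu> \<and> sets \<mu> = sets (hidden_space N S Lam)
     \<and> (\<forall>s \<in> settings N S. LHV_marginal N Lam \<mu> s = P s))"
  unfolding admits_LHV_def LHV_marginal_def by simp

lemma measurable_hidden_space_coordinate:
  assumes "n < N" "s < S n"
  shows "(\<lambda>\<omega>. \<omega> (n, s)) \<in> hidden_space N S Lam \<rightarrow>\<^sub>M restrict_space borel (Lam n s)"
proof -
  have "(n, s) \<in> all_pairs N S" using assms by (simp add: all_pairs_def)
  from measurable_component_singleton[OF this, of "\<lambda>(n, s). restrict_space borel (Lam n s)"]
  show ?thesis unfolding hidden_space_def by simp
qed

lemma borel_measurable_hidden_space_coordinate: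
  assumes "n < N" "s < S n"
  shows "(\<lambda>\<omega>. \<omega> (n, s)) \<in> borel_measurable (hidden_space N S Lam)"
  using measurable_compose[OF measurable_hidden_space_coordinate[of n N s S, OF assms]
      measurable_restrict_space1[OF measurable_ident]]
  by simp

lemma hidden_space_coordinate_in:
  assumes "n < N" "s < S n" "\<omega> \<in> space (hidden_space N S Lam)"
  shows "\<omega> (n, s) \<in> Lam n s"
  using measurable_space[OF measurable_hidden_space_coordinate[of n N s S, OF assms(1,2)] assms(3)]
  by (simp add: space_restrict_space)

lemma curry_hidden_space_in_cube:
  assumes "\<forall>n<N. \<forall>s<S n. Lam n s \<subseteq> {-1..1}" "\<omega> \<in> space (hidden_space N S Lam)"
  shows "curry \<omega> \<in> cube N S"
proof -
  have "\<omega> (n, s) \<in> {-1..1}" if "n < N" "s < S n" for n s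
    using assms(1) hidden_space_coordinate_in[of n N s S, OF that assms(2)] that by blast
  then show ?thesis by (simp add: cube_def)
qed

lemma measurable_setting_outcomes:
  assumes "s \<in> settings N S"
  shows "(\<lambda>\<omega>. \<lambda>n\<in>{..<N}. \<omega> (n, s n)) \<in> hidden_space N S Lam \<rightarrow>\<^sub>M outcome_space N Lam s"
  unfolding outcome_space_def
  using assms by (intro measurable_restrict measurable_hidden_space_coordinate) (auto simp: settings_def)

lemma borel_measurable_prod_hidden_space_coordinates:
  assumes "A \<in> site_sets N" "t \<in> PiE A (\<lambda>n. {..<S n})"
  shows "(\<lambda>\<omega>. \<Prod>n\<in>A. \<omega> (n, t n)) \<in> borel_measurable (hidden_space N S Lam)"
  using assms
  by (intro borel_measurable_prod borel_measurable_hidden_space_coordinate)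
     (auto dest!: site_setsD simp: PiE_def Pi_def)

lemma borel_measurable_F_total_curry:
  "(\<lambda>\<omega>. F_total N S \<gamma> (curry \<omega>)) \<in> borel_measurable (hidden_space N S Lam)"
  unfolding F_total_def F_gamma_def curry_conv
  by (intro borel_measurable_sum borel_measurable_times borel_measurable_const
      borel_measurable_prod_hidden_space_coordinates)

lemma LHV_experiment_LHV_marginal:
  assumes "prob_space \<mu>" "sets \<mu> = sets (hidden_space N S Lam)"
  shows "LHV_experiment N S Lam (LHV_marginal N Lam \<mu>)"
  unfolding LHV_experiment_def corr_experiment_def admits_LHV_iff LHV_marginal_def
  using assms measurable_setting_outcomes
  by (auto intro!: prob_space.prob_space_distr simp: measurable_cong_sets[OF assms(2) refl])

text \<open>The hypothesis \<open>S n \<ge> 1\<close> makes the setting \<open>0\<close>, used by \<open>extend_setting\<close> at the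
  sites outside \<open>A\<close>, a legal one.\<close>

lemma correlation_LHV_marginal:
  assumes sets: "sets \<mu> = sets (hidden_space N S Lam)"
    and S: "\<forall>n<N. S n \<ge> 1"
    and P: "\<forall>s \<in> settings N S. LHV_marginal N Lam \<mu> s = P s"
    and A: "A \<in> site_sets N" and t: "t \<in> PiE A (\<lambda>n. {..<S n})"
  shows "correlation N P A t = (\<integral>\<omega>. (\<Prod>n\<in>A. \<omega> (n, t n)) \<partial>\<mu>)"
proof -
  define s where "s = extend_setting N A t"
  have A_sites: "finite A" "A \<subseteq> {..<N}" using site_setsD[OF A] by auto
  have s_setting: "s \<in> settings N S"
    using A_sites t S unfolding s_def extend_setting_def settings_def by (auto simp: PiE_def Pi_def)
  have "correlation N P A t = (\<integral>\<omega>. (\<Prod>n\<in>A. (\<lambda>n\<in>{..<N}. \<omega> (n, s n)) n) \<partial>\<mu>)"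
    unfolding correlation_def s_def[symmetric] P[rule_format, OF s_setting, symmetric] LHV_marginal_def
    using A_sites measurable_setting_outcomes[OF s_setting]
    by (intro integral_distr borel_measurable_prod)
       (auto simp: measurable_cong_sets[OF sets refl] outcome_space_def intro!: measurable_restrict_space1
         measurable_compose[OF measurable_component_singleton])
  also have "\<dots> = (\<integral>\<omega>. (\<Prod>n\<in>A. \<omega> (n, t n)) \<partial>\<mu>)"
    using A_sites by (intro Bochner_Integration.integral_cong prod.cong) (auto simp: s_def extend_setting_def)
  finally show ?thesis .
qed

lemma Bell_value_LHV_marginal:
  assumes \<mu>: "prob_space \<mu>" and sets: "sets \<mu> = sets (hidden_space N S Lam)"
    and S: "\<forall>n<N. S n \<ge> 1" and Lam: "\<forall>n<N. \<forall>s<S n. Lam n s \<subseteq> {-1..1}"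
    and P: "\<forall>s \<in> settings N S. LHV_marginal N Lam \<mu> s = P s"
  shows "Bell_value N S \<gamma> P = (\<integral>\<omega>. F_total N S \<gamma> (curry \<omega>) \<partial>\<mu>)"
proof -
  interpret prob_space \<mu> by (rule \<mu>)
  have integrable: "integrable \<mu> (\<lambda>\<omega>. \<gamma> A t * (\<Prod>n\<in>A. \<omega> (n, t n)))"
    if A: "A \<in> site_sets N" and t: "t \<in> PiE A (\<lambda>n. {..<S n})" for A t
  proof (intro integrable_mult_right integrable_const_bound[where B = 1] AE_I2)
    show "(\<lambda>\<omega>. \<Prod>n\<in>A. \<omega> (n, t n)) \<in> borel_measurable \<mu>"
      using borel_measurable_prod_hidden_space_coordinates[OF A t]
      by (simp add: measurable_cong_sets[OF sets refl])
    fix \<omega> assume "\<omega> \<in> space \<mu>"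
    then have "curry \<omega> \<in> cube N S"
      using sets_eq_imp_space_eq[OF sets] by (simp add: curry_hidden_space_in_cube[OF Lam])
    moreover have "n < N" "t n < S n" if "n \<in> A" for n
      using that t site_setsD[OF A] by (auto simp: PiE_def Pi_def)
    ultimately have "\<bar>\<omega> (n, t n)\<bar> \<le> 1" if "n \<in> A" for n
      using that by (auto simp: cube_def abs_le_iff)
    then show "norm (\<Prod>n\<in>A. \<omega> (n, t n)) \<le> 1"
      by (simp add: abs_prod prod_le_1)
  qed
  have "Bell_value N S \<gamma> P
      = (\<Sum>A\<in>site_sets N. \<Sum>t\<in>PiE A (\<lambda>n. {..<S n}). \<integral>\<omega>. \<gamma> A t * (\<Prod>n\<in>A. \<omega> (n, t n)) \<partial>\<mu>)"
    unfolding Bell_value_def by (intro sum.cong refl) (simp only: correlation_LHV_marginal[OF sets S P] integral_mult_right_zero)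
  also have "\<dots> = (\<Sum>A\<in>site_sets N.
      \<integral>\<omega>. (\<Sum>t\<in>PiE A (\<lambda>n. {..<S n}). \<gamma> A t * (\<Prod>n\<in>A. \<omega> (n, t n))) \<partial>\<mu>)"
    by (intro sum.cong refl Bochner_Integration.integral_sum[symmetric]) (blast intro: integrable)+
  also have "\<dots> = (\<integral>\<omega>. F_total N S \<gamma> (curry \<omega>) \<partial>\<mu>)"
    unfolding F_total_def F_gamma_def curry_conv
    by (intro Bochner_Integration.integral_sum[symmetric] Bochner_Integration.integrable_sum)
       (blast intro: integrable)+
  finally show ?thesis .
qed

lemma Bell_value_LHV_between_vertex_extremes:
  assumes S: "\<forall>n<N. S n \<ge> 1" and Lam: "\<forall>n<N. \<forall>s<S n. Lam n s \<subseteq> {-1..1}"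
    and LHV: "LHV_experiment N S Lam P"
  shows "Min (F_total N S \<gamma> ` vertices N S) \<le> Bell_value N S \<gamma> P
       \<and> Bell_value N S \<gamma> P \<le> Max (F_total N S \<gamma> ` vertices N S)"
proof -
  obtain \<mu> where \<mu>: "prob_space \<mu>" and sets: "sets \<mu> = sets (hidden_space N S Lam)"
    and P: "\<forall>s \<in> settings N S. LHV_marginal N Lam \<mu> s = P s"
    using LHV unfolding LHV_experiment_def admits_LHV_iff by blast
  interpret prob_space \<mu> by (rule \<mu>)
  let ?F = "\<lambda>\<omega>. F_total N S \<gamma> (curry \<omega>)"
  let ?m = "Min (F_total N S \<gamma> ` vertices N S)" and ?M = "Max (F_total N S \<gamma> ` vertices N S)"
  have bounds: "?m \<le> ?F \<omega> \<and> ?F \<omega> \<le> ?M" if "\<omega> \<in> space \<mu>" for \<omega>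
    using that sets_eq_imp_space_eq[OF sets]
    by (simp add: F_total_between_vertex_extremes curry_hidden_space_in_cube[OF Lam])
  have "?F \<in> borel_measurable \<mu>"
    using borel_measurable_F_total_curry by (simp add: measurable_cong_sets[OF sets refl])
  moreover have "norm (?F \<omega>) \<le> \<bar>?m\<bar> + \<bar>?M\<bar>" if "\<omega> \<in> space \<mu>" for \<omega>
    using bounds[OF that] unfolding real_norm_def by arith
  ultimately have "integrable \<mu> ?F"
    by (intro integrable_const_bound[where B = "\<bar>?m\<bar> + \<bar>?M\<bar>"] AE_I2)
  then show ?thesis
    unfolding Bell_value_LHV_marginal[OF \<mu> sets S Lam P]
    using bounds by (intro conjI integral_ge_const integral_le_const AE_I2) auto
qed

subsection \<open>Tightness\<close>

lemma hidden_outcomes_tendsto_vertex: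
  assumes Lam: "\<forall>n<N. \<forall>s<S n. Lam n s \<noteq> {} \<and> Lam n s \<subseteq> {-1..1} \<and> Sup (Lam n s) = 1 \<and> Inf (Lam n s) = -1"
    and v: "v \<in> vertices N S"
  obtains \<omega> where "\<And>k. \<omega> k \<in> space (hidden_space N S Lam)"
    and "\<And>n s. n < N \<Longrightarrow> s < S n \<Longrightarrow> (\<lambda>k. \<omega> k (n, s)) \<longlonglongrightarrow> v n s"
proof -
  have "v n s \<in> closure (Lam n s)" if "n < N" "s < S n" for n s
  proof -
    have "v n s \<in> {-1, 1}" using v that by (auto simp: vertices_def)
    moreover have "bdd_above (Lam n s)" "bdd_below (Lam n s)"
      using Lam that by (meson bdd_above_Icc bdd_above_mono, meson bdd_below_Icc bdd_below_mono)
    ultimately show ?thesis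
      using Lam that closure_contains_Sup[of "Lam n s"] closure_contains_Inf[of "Lam n s"] by auto
  qed
  then have "\<forall>p\<in>all_pairs N S. \<exists>x. (\<forall>k. x k \<in> Lam (fst p) (snd p)) \<and> x \<longlonglongrightarrow> v (fst p) (snd p)"
    by (auto simp: all_pairs_def closure_sequential)
  from bchoice[OF this] obtain x where
    x: "\<forall>p\<in>all_pairs N S. (\<forall>k. x p k \<in> Lam (fst p) (snd p)) \<and> x p \<longlonglongrightarrow> v (fst p) (snd p)"
    by blast
  show ?thesis
  proof
    show "(\<lambda>p\<in>all_pairs N S. x p k) \<in> space (hidden_space N S Lam)" for k
      using x by (auto simp: hidden_space_def space_PiM space_restrict_space)
    show "(\<lambda>k. (\<lambda>p\<in>all_pairs N S. x p k) (n, s)) \<longlonglongrightarrow> v n s" if "n < N" "s < S n" for n s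
      using x that by (simp add: all_pairs_def)
  qed
qed

lemma tendsto_F_total:
  assumes "\<And>n s. n < N \<Longrightarrow> s < S n \<Longrightarrow> ((\<lambda>k. \<eta> k n s) \<longlongrightarrow> \<xi> n s) F"
  shows "((\<lambda>k. F_total N S \<gamma> (\<eta> k)) \<longlongrightarrow> F_total N S \<gamma> \<xi>) F"
  unfolding F_total_def F_gamma_def
  by (intro tendsto_sum tendsto_mult_left tendsto_prod assms)
     (auto dest!: site_setsD simp: PiE_def Pi_def)

lemma Bell_value_LHV_marginal_return:
  assumes S: "\<forall>n<N. S n \<ge> 1" and Lam: "\<forall>n<N. \<forall>s<S n. Lam n s \<subseteq> {-1..1}"
    and \<omega>: "\<omega> \<in> space (hidden_space N S Lam)"
  shows "Bell_value N S \<gamma> (LHV_marginal N Lam (return (hidden_space N S Lam) \<omega>))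
       = F_total N S \<gamma> (curry \<omega>)"
proof -
  have "Bell_value N S \<gamma> (LHV_marginal N Lam (return (hidden_space N S Lam) \<omega>))
      = (\<integral>\<omega>'. F_total N S \<gamma> (curry \<omega>') \<partial>return (hidden_space N S Lam) \<omega>)"
    using S Lam by (intro Bell_value_LHV_marginal prob_space_return \<omega>) auto
  also have "\<dots> = F_total N S \<gamma> (curry \<omega>)"
    by (rule integral_return[OF \<omega> borel_measurable_F_total_curry])
  finally show ?thesis .
qed

text \<open>The bounds need not be attained (\<open>\<plusminus>1\<close> need not be outcomes), only approached.\<close>

lemma vertex_value_LHV_approximable:
  assumes S: "\<forall>n<N. S n \<ge> 1"
    and Lam: "\<forall>n<N. \<forall>s<S n. Lam n s \<noteq> {} \<and> Lam n s \<subseteq> {-1..1} \<and> Sup (Lam n s) = 1 \<and> Inf (Lam n s) = -1"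
    and v: "v \<in> vertices N S" and \<epsilon>: "\<epsilon> > 0"
  shows "\<exists>P. LHV_experiment N S Lam P \<and> \<bar>Bell_value N S \<gamma> P - F_total N S \<gamma> v\<bar> < \<epsilon>"
proof -
  have Lam_cube: "\<forall>n<N. \<forall>s<S n. Lam n s \<subseteq> {-1..1}" using Lam by blast
  obtain \<omega> where \<omega>: "\<And>k. \<omega> k \<in> space (hidden_space N S Lam)"
    and lim: "\<And>n s. n < N \<Longrightarrow> s < S n \<Longrightarrow> (\<lambda>k. \<omega> k (n, s)) \<longlonglongrightarrow> v n s"
    using hidden_outcomes_tendsto_vertex[OF Lam v] by blast
  have "(\<lambda>k. F_total N S \<gamma> (curry (\<omega> k))) \<longlonglongrightarrow> F_total N S \<gamma> v"
    using lim by (intro tendsto_F_total) simp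
  from LIMSEQ_D[OF this \<epsilon>] obtain k where "\<bar>F_total N S \<gamma> (curry (\<omega> k)) - F_total N S \<gamma> v\<bar> < \<epsilon>"
    by auto
  then show ?thesis
    using LHV_experiment_LHV_marginal[OF prob_space_return[OF \<omega>] sets_return]
      Bell_value_LHV_marginal_return[OF S Lam_cube \<omega>]
    by (intro exI[of _ "LHV_marginal N Lam (return (hidden_space N S Lam) (\<omega> k))"]) simp
qed

theorem corollary1:
  fixes N :: nat and S :: "nat \<Rightarrow> nat" and Lam :: "nat \<Rightarrow> nat \<Rightarrow> real set"
    and P :: "(nat \<Rightarrow> nat) \<Rightarrow> (nat \<Rightarrow> real) measure"
    and \<gamma> :: "nat set \<Rightarrow> (nat \<Rightarrow> nat) \<Rightarrow> real"
  assumes "N \<ge> 1"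
    and "\<forall>n<N. S n \<ge> 1"
    and "\<forall>n<N. \<forall>s<S n. Lam n s \<noteq> {} \<and> Lam n s \<subseteq> {-1..1} \<and> Sup (Lam n s) = 1 \<and> Inf (Lam n s) = -1"
    and "LHV_experiment N S Lam P"
  shows "Min (F_total N S \<gamma> ` vertices N S) \<le> Bell_value N S \<gamma> P
       \<and> Bell_value N S \<gamma> P \<le> Max (F_total N S \<gamma> ` vertices N S)
       \<and> (\<forall>\<epsilon>>0. \<exists>P'. LHV_experiment N S Lam P' \<and>
             Bell_value N S \<gamma> P' > Max (F_total N S \<gamma> ` vertices N S) - \<epsilon>)
       \<and> (\<forall>\<epsilon>>0. \<exists>P'. LHV_experiment N S Lam P' \<and>
             Bell_value N S \<gamma> P' < Min (F_total N S \<gamma> ` vertices N S) + \<epsilon>)"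
proof -
  let ?values = "F_total N S \<gamma> ` vertices N S"
  have "Max ?values \<in> ?values" "Min ?values \<in> ?values"
    using finite_vertices vertices_nonempty by (simp_all add: Max_in Min_in)
  then obtain v_max v_min where
    v_max: "v_max \<in> vertices N S" "F_total N S \<gamma> v_max = Max ?values" and
    v_min: "v_min \<in> vertices N S" "F_total N S \<gamma> v_min = Min ?values"
    by auto
  have "\<exists>P'. LHV_experiment N S Lam P' \<and> Bell_value N S \<gamma> P' > Max ?values - \<epsilon>"
    if \<epsilon>: "\<epsilon> > 0" for \<epsilon>
  proof -
    obtain P' where "LHV_experiment N S Lam P'" "\<bar>Bell_value N S \<gamma> P' - Max ?values\<bar> < \<epsilon>"
      using vertex_value_LHV_approximable[where \<gamma> = \<gamma>, OF assms(2,3) v_max(1) \<epsilon>] v_max(2) by auto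
    then show ?thesis by (intro exI[of _ P']) (simp add: abs_less_iff)
  qed
  moreover have "\<exists>P'. LHV_experiment N S Lam P' \<and> Bell_value N S \<gamma> P' < Min ?values + \<epsilon>"
    if \<epsilon>: "\<epsilon> > 0" for \<epsilon>
  proof -
    obtain P' where "LHV_experiment N S Lam P'" "\<bar>Bell_value N S \<gamma> P' - Min ?values\<bar> < \<epsilon>"
      using vertex_value_LHV_approximable[where \<gamma> = \<gamma>, OF assms(2,3) v_min(1) \<epsilon>] v_min(2) by auto
    then show ?thesis by (intro exI[of _ P']) (simp add: abs_less_iff)
  qed
  moreover have "\<forall>n<N. \<forall>s<S n. Lam n s \<subseteq> {-1..1}" using assms(3) by blast
  ultimately show ?thesis
    using Bell_value_LHV_between_vertex_extremes[OF assms(2) _ assms(4)] by blast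
qed

end
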